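(* There exists $N_0=N_0(V,\nu,d)$ such that, assuming $\varepsilon\|T_1(\varepsilon,\lambda)\|_0\leq1$ for all $(\varepsilon,\lambda)\in[0,\varepsilon_0]\times\Lambda$, for every $N\geq N_0$, every $j_0\in\mathbb Z^d$ with $|j_0|<2N$ and every $(\varepsilon,\lambda)\in[0,\varepsilon_0]\times\Lambda$, one has $B^0_{2,N}(j_0;\varepsilon,\lambda)\subset(-11dN^2,11dN^2)$.
   Context: Setting. $d,\nu\geq1$; $|l|,|j|$ max norms, $\|j\|^2=\sum j_i^2$. $\bar\omega\in\mathbb R^\nu$, $|\bar\omega|\leq1$; $\Lambda=[1/2,3/2]$; $\tau>0$ a parameter; $\varepsilon_0>0$. $V\in C^r(\mathbb T^d;\mathbb R)$, $m$ its average, $V_0=V-m$. $f\in C^r(\mathbb T^\nu\times\mathbb T^d\times\mathbb R;\mathbb R)$, $(\varepsilon,\lambda)\mapsto u^+(\varepsilon,\lambda)\in H^s(\mathbb T^{\nu}\times\mathbb T^d;\mathbb C)$ ($s>(d+\nu)/2$), $p=f(\cdot,|u^+|^2)+f'(\cdot,|u^+|^2)|u^+|^2$, $q=f'(\cdot,|u^+|^2)(u^+)^2$. $T_1(\varepsilon,\lambda)$ is the matrix of multiplication by $\begin{pmatrix}p&q\\\bar q&p\end{pmatrix}$ in the Fourier basis $e_{(l,j),a}$; $\|\cdot\|_0$ the $L^2$ operator norm. With $\omega=\lambda\bar\omega$, $A(\varepsilon,\lambda,\theta)=D+T_2-\varepsilon T_1+\theta Y$ indexed by $(l,j,a)$,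 $D$ diagonal with entries $-\omega\cdot l+\|j\|^2+m$ ($a=0$) and $\omega\cdot l+\|j\|^2+m$ ($a=1$), $Y$ diagonal with entries $-1$ ($a=0$), $+1$ ($a=1$), $T_2$ multiplication by $V_0$ in each component. $A_{N,j_0}(\varepsilon,\lambda,\theta)$ is the restriction of $A$ to $|l|\leq N$, $|j-j_0|\leq N$. $B^0_{2,N}(j_0;\varepsilon,\lambda):=\{\theta\in\mathbb R:\|A^{-1}_{N,j_0}(\varepsilon,\lambda,\theta)\|_0>N^\tau/2\}$ (inverse norm $+\infty$ if not invertible). *)

theory Defs
  imports "HOL-Analysis.Analysis"
begin

text \<open>Index of the Fourier basis e_{(l,j),a}: l in Z^nu, j in Z^d, a in {0,1},
  where a = 0 is encoded as False and a = 1 as True.\<close>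
type_synonym ('v, 'd) idx = "(int^('v::finite)) \<times> (int^('d::finite)) \<times> bool"

definition maxnorm :: "int^('n::finite) \<Rightarrow> int" where
  "maxnorm k = Max (range (\<lambda>i. \<bar>k $ i\<bar>))"

definition sqnorm :: "int^'n \<Rightarrow> int" where
  "sqnorm k = (\<Sum>i\<in>UNIV. (k $ i)^2)"

definition idot :: "int^'n \<Rightarrow> real^'n \<Rightarrow> real" where
  "idot k x = (\<Sum>i\<in>UNIV. of_int (k $ i) * x $ i)"

definition tcube :: "(real^'n) set" where
  "tcube = cbox 0 (\<chi> i. 2 * pi)"

definition periodic1 :: "(real^'n \<Rightarrow> 'b) \<Rightarrow> bool" where
  "periodic1 g = (\<forall>x i. g (x + (2 * pi) *\<^sub>R axis i 1) = g x)"

definition periodic2 :: "(real^'v \<Rightarrow> real^'d \<Rightarrow> 'b) \<Rightarrow> bool" where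
  "periodic2 g = ((\<forall>x y i. g (x + (2 * pi) *\<^sub>R axis i 1) y = g x y) \<and>
                  (\<forall>x y i. g x (y + (2 * pi) *\<^sub>R axis i 1) = g x y))"

definition fcoef1 :: "(real^'d \<Rightarrow> complex) \<Rightarrow> int^'d \<Rightarrow> complex" where
  "fcoef1 g j = complex_of_real (1 / (2 * pi) ^ CARD('d)) *
     set_lebesgue_integral lborel tcube (\<lambda>y. g y * exp (- \<i> * complex_of_real (idot j y)))"

definition fcoef2 :: "(real^'v \<Rightarrow> real^'d \<Rightarrow> complex) \<Rightarrow> int^'v \<Rightarrow> int^'d \<Rightarrow> complex" where
  "fcoef2 g l j = complex_of_real (1 / (2 * pi) ^ (CARD('v) + CARD('d))) *
     set_lebesgue_integral lborel (tcube \<times> tcube)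
       (\<lambda>z. g (fst z) (snd z) * exp (- \<i> * complex_of_real (idot l (fst z) + idot j (snd z))))"

definition avg :: "(real^'d \<Rightarrow> real) \<Rightarrow> real" where
  "avg V = (1 / (2 * pi) ^ CARD('d)) * set_lebesgue_integral lborel tcube V"

fun Ck :: "nat \<Rightarrow> ('a::euclidean_space \<Rightarrow> real) \<Rightarrow> bool" where
  "Ck 0 g = continuous_on UNIV g"
| "Ck (Suc k) g = (g differentiable_on UNIV \<and>
       (\<forall>b\<in>Basis. Ck k (\<lambda>x. frechet_derivative g (at x) b)))"

definition in_Hs :: "real \<Rightarrow> (real^'v \<Rightarrow> real^'d \<Rightarrow> complex) \<Rightarrow> bool" where
  "in_Hs s g = (periodic2 g \<and>
     (\<lambda>z. g (fst z) (snd z)) \<in> borel_measurable lborel \<and>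
     set_integrable lborel (tcube \<times> tcube) (\<lambda>z. (cmod (g (fst z) (snd z)))^2) \<and>
     (\<lambda>(l, j). (1 + real_of_int (sqnorm l + sqnorm j)) powr s * (cmod (fcoef2 g l j))^2)
        summable_on UNIV)"

text \<open>L^2 operator norm of an infinite matrix (extended real, possibly infinite):
  supremum over finitely supported x with l2 norm at most 1 and finite sets of rows F.\<close>
definition opnorm0 :: "('i \<Rightarrow> 'i \<Rightarrow> complex) \<Rightarrow> ereal" where
  "opnorm0 T = (SUP xF \<in> {(x, F). finite {k. x k \<noteq> 0} \<and>
        (\<Sum>k\<in>{k. x k \<noteq> 0}. (cmod (x k))^2) \<le> 1 \<and> finite F}.
      ereal (sqrt (\<Sum>i\<in>snd xF. (cmod (\<Sum>k\<in>{k. fst xF k \<noteq> 0}. T i k * fst xF k))^2)))"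

definition fin_opnorm :: "'i set \<Rightarrow> ('i \<Rightarrow> 'i \<Rightarrow> complex) \<Rightarrow> real" where
  "fin_opnorm S M = Sup {sqrt (\<Sum>i\<in>S. (cmod (\<Sum>k\<in>S. M i k * x k))^2) | x.
                         (\<Sum>k\<in>S. (cmod (x k))^2) \<le> 1}"

definition is_inverse_on :: "'i set \<Rightarrow> ('i \<Rightarrow> 'i \<Rightarrow> complex) \<Rightarrow> ('i \<Rightarrow> 'i \<Rightarrow> complex) \<Rightarrow> bool" where
  "is_inverse_on S M B = (\<forall>i\<in>S. \<forall>k\<in>S.
      (\<Sum>m\<in>S. B i m * M m k) = (if i = k then 1 else 0) \<and>
      (\<Sum>m\<in>S. M i m * B m k) = (if i = k then 1 else 0))"

definition inv_opnorm :: "'i set \<Rightarrow> ('i \<Rightarrow> 'i \<Rightarrow> complex) \<Rightarrow> ereal" where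
  "inv_opnorm S M = (if \<exists>B. is_inverse_on S M B
      then ereal (fin_opnorm S (SOME B. is_inverse_on S M B)) else \<infinity>)"

text \<open>p and q built from f and u = u^+(eps,lambda); f' is the derivative in the last variable.\<close>
definition pfun :: "(real^'v \<Rightarrow> real^'d \<Rightarrow> real \<Rightarrow> real) \<Rightarrow> (real^'v \<Rightarrow> real^'d \<Rightarrow> complex)
    \<Rightarrow> real^'v \<Rightarrow> real^'d \<Rightarrow> complex" where
  "pfun f u x y = complex_of_real (f x y ((cmod (u x y))^2)
      + deriv (f x y) ((cmod (u x y))^2) * (cmod (u x y))^2)"

definition qfun :: "(real^'v \<Rightarrow> real^'d \<Rightarrow> real \<Rightarrow> real) \<Rightarrow> (real^'v \<Rightarrow> real^'d \<Rightarrow> complex)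
    \<Rightarrow> real^'v \<Rightarrow> real^'d \<Rightarrow> complex" where
  "qfun f u x y = complex_of_real (deriv (f x y) ((cmod (u x y))^2)) * (u x y)^2"

text \<open>T_1: matrix of multiplication by ((p, q), (conj q, p)) in the Fourier basis.\<close>
definition T1 :: "(real^'v \<Rightarrow> real^'d \<Rightarrow> real \<Rightarrow> real) \<Rightarrow> (real^'v \<Rightarrow> real^'d \<Rightarrow> complex)
    \<Rightarrow> ('v, 'd) idx \<Rightarrow> ('v, 'd) idx \<Rightarrow> complex" where
  "T1 f u = (\<lambda>(l, j, a) (l', j', a').
      fcoef2 (if a = a' then pfun f u
              else if \<not> a then qfun f u
              else (\<lambda>x y. cnj (qfun f u x y))) (l - l') (j - j'))"

text \<open>T_2: multiplication by V_0 = V - m in each component.\<close>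
definition T2 :: "(real^'d \<Rightarrow> real) \<Rightarrow> ('v, 'd) idx \<Rightarrow> ('v, 'd) idx \<Rightarrow> complex" where
  "T2 V = (\<lambda>(l, j, a) (l', j', a').
      if l = l' \<and> a = a' then fcoef1 (\<lambda>y. complex_of_real (V y - avg V)) (j - j') else 0)"

text \<open>A(eps,lambda,theta) = D + T_2 - eps T_1 + theta Y, with omega = lambda * omegabar.\<close>
definition Aop :: "(real^'d \<Rightarrow> real) \<Rightarrow> real^'v \<Rightarrow> (real^'v \<Rightarrow> real^'d \<Rightarrow> real \<Rightarrow> real)
    \<Rightarrow> (real \<Rightarrow> real \<Rightarrow> real^'v \<Rightarrow> real^'d \<Rightarrow> complex) \<Rightarrow> real \<Rightarrow> real \<Rightarrow> real
    \<Rightarrow> ('v, 'd) idx \<Rightarrow> ('v, 'd) idx \<Rightarrow> complex" where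
  "Aop V ombar f u eps lam theta = (\<lambda>(l, j, a) (l', j', a').
      (if (l, j, a) = (l', j', a') then
         complex_of_real ((if a then 1 else -1) * idot l (lam *\<^sub>R ombar)
                          + of_int (sqnorm j) + avg V + theta * (if a then 1 else -1))
       else 0)
      + T2 V (l, j, a) (l', j', a') - complex_of_real eps * T1 f (u eps lam) (l, j, a) (l', j', a'))"

definition trunc :: "nat \<Rightarrow> int^('d::finite) \<Rightarrow> ('v::finite, 'd) idx set" where
  "trunc N j0 = {(l, j, a). maxnorm l \<le> int N \<and> maxnorm (j - j0) \<le> int N}"

definition B02 :: "real \<Rightarrow> (real^'d \<Rightarrow> real) \<Rightarrow> real^'v \<Rightarrow> (real^'v \<Rightarrow> real^'d \<Rightarrow> real \<Rightarrow> real)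
    \<Rightarrow> (real \<Rightarrow> real \<Rightarrow> real^'v \<Rightarrow> real^'d \<Rightarrow> complex) \<Rightarrow> nat \<Rightarrow> int^'d \<Rightarrow> real \<Rightarrow> real
    \<Rightarrow> real set" where
  "B02 \<tau> V ombar f u N j0 eps lam =
     {theta. inv_opnorm (trunc N j0 :: ('v, 'd) idx set) (Aop V ombar f u eps lam theta)
               > ereal (real N powr \<tau> / 2)}"

end

theory Submission
  imports Defs "Jordan_Normal_Form.Determinant"
begin

text \<open>
  On the truncation \<open>|l| \<le> N\<close>, \<open>|j - j\<^sub>0| \<le> N\<close> we have \<open>|j| \<le> 3N\<close>, so the diagonal entries
  \<open>\<mp>\<omega>\<cdot>l + \<parallel>j\<parallel>\<^sup>2 + m \<mp> \<theta>\<close> of \<open>D + \<theta>Y\<close> have modulus at least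
  \<open>\<delta> = 2dN\<^sup>2 - (3/2)\<nu>N - |m|\<close> as soon as \<open>|\<theta>| \<ge> 11dN\<^sup>2\<close>. The rest of the matrix,
  \<open>T\<^sub>2 - \<epsilon>T\<^sub>1\<close>, has norm at most \<open>sup|V\<^sub>0| + 1\<close>: \<open>T\<^sub>2\<close> acts on each Fourier block as
  multiplication by \<open>V\<^sub>0\<close> (bounded via Bessel's inequality) and \<open>\<epsilon>\<parallel>T\<^sub>1\<parallel> \<le> 1\<close> by hypothesis.
  A diagonal matrix bounded below by \<open>\<delta>\<close> plus a perturbation of norm \<open>\<rho> < \<delta>\<close> is invertible
  with inverse of norm at most \<open>1/(\<delta> - \<rho>)\<close>, which is \<open>\<le> 1/2 \<le> N\<^sup>\<tau>/2\<close> once \<open>N\<close> is large.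
\<close>

section \<open>Finite matrices on an index set\<close>

definition l2_norm :: "'i set \<Rightarrow> ('i \<Rightarrow> complex) \<Rightarrow> real" where
  "l2_norm S y = L2_set (\<lambda>i. cmod (y i)) S"

definition mat_apply :: "'i set \<Rightarrow> ('i \<Rightarrow> 'i \<Rightarrow> complex) \<Rightarrow> ('i \<Rightarrow> complex) \<Rightarrow> 'i \<Rightarrow> complex" where
  "mat_apply S M y i = (\<Sum>k\<in>S. M i k * y k)"

lemma l2_norm_nonneg [simp]: "0 \<le> l2_norm S y"
  by (simp add: l2_norm_def)

lemma l2_norm_power2: "(l2_norm S y)\<^sup>2 = (\<Sum>i\<in>S. (cmod (y i))\<^sup>2)"
  by (simp add: l2_norm_def L2_set_def sum_nonneg)

lemma l2_norm_cong: "(\<And>i. i \<in> S \<Longrightarrow> a i = b i) \<Longrightarrow> l2_norm S a = l2_norm S b"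
  unfolding l2_norm_def by (rule L2_set_cong) auto

lemma l2_norm_eq_0_iff: "finite S \<Longrightarrow> l2_norm S y = 0 \<longleftrightarrow> (\<forall>i\<in>S. y i = 0)"
  by (simp add: l2_norm_def L2_set_eq_0_iff)

lemma l2_norm_mult_left: "l2_norm S (\<lambda>i. c * y i) = cmod c * l2_norm S y"
  by (simp add: l2_norm_def norm_mult L2_set_right_distrib)

lemma l2_norm_add_le: "l2_norm S (\<lambda>i. a i + b i) \<le> l2_norm S a + l2_norm S b"
proof -
  have "l2_norm S (\<lambda>i. a i + b i) \<le> L2_set (\<lambda>i. cmod (a i) + cmod (b i)) S"
    unfolding l2_norm_def by (rule L2_set_mono) (auto simp: norm_triangle_ineq)
  also have "\<dots> \<le> l2_norm S a + l2_norm S b"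
    unfolding l2_norm_def by (rule L2_set_triangle_ineq)
  finally show ?thesis .
qed

lemma l2_norm_diff_le: "l2_norm S (\<lambda>i. a i - b i) \<le> l2_norm S a + l2_norm S b"
  using l2_norm_add_le[of S a "\<lambda>i. - b i"] by (simp add: l2_norm_def)

lemma l2_norm_mult_left_ge:
  fixes D :: "'i \<Rightarrow> real"
  assumes "\<And>i. i \<in> S \<Longrightarrow> \<delta> \<le> \<bar>D i\<bar>" and "0 \<le> \<delta>"
  shows "\<delta> * l2_norm S y \<le> l2_norm S (\<lambda>i. complex_of_real (D i) * y i)"
  unfolding l2_norm_def L2_set_right_distrib[OF assms(2)]
  using assms by (intro L2_set_mono) (auto simp: norm_mult intro: mult_right_mono)

lemma mat_apply_reindex:
  fixes f :: "nat \<Rightarrow> 'i"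
  assumes f: "bij_betw f {0..<n} S"
  shows "mat_apply S M y (f i) = mat_apply {0..<n} (\<lambda>i k. M (f i) (f k)) (y \<circ> f) i"
  unfolding mat_apply_def comp_def by (rule sum.reindex_bij_betw[OF f, symmetric])

lemma is_inverse_on_reindex:
  fixes f :: "nat \<Rightarrow> 'i"
  assumes f: "bij_betw f {0..<n} S"
    and B: "is_inverse_on {0..<n} (\<lambda>i k. M (f i) (f k)) B"
  shows "is_inverse_on S M (\<lambda>s t. B (inv_into {0..<n} f s) (inv_into {0..<n} f t))"
  unfolding is_inverse_on_def
proof (intro ballI)
  fix s t assume "s \<in> S" "t \<in> S"
  then obtain p q where p: "p < n" "s = f p" and q: "q < n" "t = f q"
    using f by (metis atLeastLessThan_iff bij_betw_def imageE)
  have g: "inv_into {0..<n} f (f r) = r" if "r < n" for r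
    using that by (intro bij_betw_inv_into_left[OF f]) simp
  have eq: "f p = f q \<longleftrightarrow> p = q" using f p q by (auto simp: bij_betw_def inj_on_def)
  have "(\<Sum>m\<in>S. B p (inv_into {0..<n} f m) * M m (f q)) = (\<Sum>r\<in>{0..<n}. B p r * M (f r) (f q))"
    "(\<Sum>m\<in>S. M (f p) m * B (inv_into {0..<n} f m) q) = (\<Sum>r\<in>{0..<n}. M (f p) (f r) * B r q)"
    unfolding sum.reindex_bij_betw[OF f, symmetric] by (auto intro!: sum.cong simp: g)
  then show "(\<Sum>m\<in>S. B (inv_into {0..<n} f s) (inv_into {0..<n} f m) * M m t) = (if s = t then 1 else 0) \<and>
      (\<Sum>m\<in>S. M s m * B (inv_into {0..<n} f m) (inv_into {0..<n} f t)) = (if s = t then 1 else 0)"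
    using B p q eq g unfolding is_inverse_on_def by auto
qed

no_notation Finite_Cartesian_Product.vec_nth (infixl "$" 90)

lemma ex_is_inverse_on_atLeastLessThan_if_inj:
  fixes M :: "nat \<Rightarrow> nat \<Rightarrow> complex"
  assumes inj: "\<And>y. \<forall>i\<in>{0..<n}. mat_apply {0..<n} M y i = 0 \<Longrightarrow> \<forall>i\<in>{0..<n}. y i = 0"
  shows "\<exists>B. is_inverse_on {0..<n} M B"
proof -
  define A :: "complex mat" where "A = Matrix.mat n n (\<lambda>(i, k). M i k)"
  have A: "A \<in> carrier_mat n n" unfolding A_def by simp
  have "det A \<noteq> 0"
  proof
    assume "det A = 0"
    then obtain v where v: "v \<in> carrier_vec n" "v \<noteq> 0\<^sub>v n" "A *\<^sub>v v = 0\<^sub>v n"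
      using det_0_iff_vec_prod_zero_field[OF A] by blast
    have "mat_apply {0..<n} M (\<lambda>k. v $ k) i = (A *\<^sub>v v) $ i" if "i < n" for i
      using v(1) that by (simp add: mat_apply_def A_def mult_mat_vec_def scalar_prod_def atLeast0LessThan)
    then have "\<forall>i\<in>{0..<n}. v $ i = 0" using inj[of "\<lambda>k. v $ k"] v(3) by simp
    then have "v = 0\<^sub>v n" using v(1) by (intro eq_vecI) auto
    with v(2) show False ..
  qed
  from det_non_zero_imp_unit[OF A this, of "()"]
  obtain C where C: "C \<in> carrier_mat n n" "C * A = 1\<^sub>m n" "A * C = 1\<^sub>m n"
    unfolding Units_def ring_mat_def by auto
  have "(C * A) $$ (i, k) = (\<Sum>m\<in>{0..<n}. C $$ (i, m) * M m k)"
    "(A * C) $$ (i, k) = (\<Sum>m\<in>{0..<n}. M i m * C $$ (m, k))" if "i < n" "k < n" for i k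
    using C(1) that by (simp_all add: A_def index_mult_mat scalar_prod_def atLeast0LessThan)
  then have "is_inverse_on {0..<n} M (\<lambda>i k. C $$ (i, k))"
    using C(2,3) unfolding is_inverse_on_def by auto
  then show ?thesis by blast
qed

notation Finite_Cartesian_Product.vec_nth (infixl "$" 90)

lemma ex_is_inverse_on_if_inj:
  fixes M :: "'i \<Rightarrow> 'i \<Rightarrow> complex"
  assumes S: "finite S"
    and inj: "\<And>y. \<forall>i\<in>S. mat_apply S M y i = 0 \<Longrightarrow> \<forall>i\<in>S. y i = 0"
  shows "\<exists>B. is_inverse_on S M B"
proof -
  define n where "n = card S"
  obtain f where f: "bij_betw f {0..<n} S" using ex_bij_betw_nat_finite[OF S] n_def by blast
  have fS: "f i \<in> S" if "i < n" for i using f that by (auto simp: bij_betw_def)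
  have "\<exists>B. is_inverse_on {0..<n} (\<lambda>i k. M (f i) (f k)) B"
  proof (rule ex_is_inverse_on_atLeastLessThan_if_inj)
    fix y assume y: "\<forall>i\<in>{0..<n}. mat_apply {0..<n} (\<lambda>i k. M (f i) (f k)) y i = 0"
    define y' where "y' = y \<circ> inv_into {0..<n} f"
    have y'f: "y' (f i) = y i" if "i < n" for i
      using that unfolding y'_def by (simp add: bij_betw_inv_into_left[OF f])
    have "mat_apply S M y' (f i) = 0" if "i < n" for i
    proof -
      have "mat_apply S M y' (f i) = mat_apply {0..<n} (\<lambda>i k. M (f i) (f k)) (y' \<circ> f) i"
        by (rule mat_apply_reindex[OF f])
      also have "\<dots> = mat_apply {0..<n} (\<lambda>i k. M (f i) (f k)) y i"
        unfolding mat_apply_def by (intro sum.cong) (auto simp: y'f)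
      finally show ?thesis using y that by simp
    qed
    then have "\<forall>s\<in>S. mat_apply S M y' s = 0"
      using f by (metis atLeastLessThan_iff bij_betw_def imageE)
    then show "\<forall>i\<in>{0..<n}. y i = 0" using inj y'f fS by fastforce
  qed
  then show ?thesis using is_inverse_on_reindex[OF f] by blast
qed

lemma mat_apply_inverse_on:
  assumes "finite S" "is_inverse_on S M B" "i \<in> S"
  shows "mat_apply S M (mat_apply S B x) i = x i"
proof -
  have "mat_apply S M (mat_apply S B x) i = (\<Sum>k\<in>S. \<Sum>m\<in>S. M i k * B k m * x m)"
    by (simp add: mat_apply_def sum_distrib_left mult.assoc)
  also have "\<dots> = (\<Sum>m\<in>S. (\<Sum>k\<in>S. M i k * B k m) * x m)"
    by (subst sum.swap) (simp add: sum_distrib_right)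
  also have "\<dots> = (\<Sum>m\<in>S. if i = m then x m else 0)"
    using assms(2,3) unfolding is_inverse_on_def by (intro sum.cong) auto
  finally show ?thesis using assms(1,3) by simp
qed

lemma fin_opnorm_le:
  assumes "\<And>x. l2_norm S x \<le> 1 \<Longrightarrow> l2_norm S (mat_apply S B x) \<le> c"
  shows "fin_opnorm S B \<le> c"
  unfolding fin_opnorm_def
proof (rule cSup_least)
  show "{sqrt (\<Sum>i\<in>S. (cmod (\<Sum>k\<in>S. B i k * x k))\<^sup>2) |x. (\<Sum>k\<in>S. (cmod (x k))\<^sup>2) \<le> 1} \<noteq> {}"
    by (auto intro!: exI[of _ "\<lambda>_. 0"])
  show "v \<le> c" if "v \<in> {sqrt (\<Sum>i\<in>S. (cmod (\<Sum>k\<in>S. B i k * x k))\<^sup>2) |x. (\<Sum>k\<in>S. (cmod (x k))\<^sup>2) \<le> 1}"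
    for v
    using that assms by (auto simp: l2_norm_def L2_set_def mat_apply_def)
qed

lemma inv_opnorm_le_if_bounded_below:
  assumes S: "finite S" and c: "0 < c"
    and below: "\<And>y. c * l2_norm S y \<le> l2_norm S (mat_apply S M y)"
  shows "inv_opnorm S M \<le> ereal (1 / c)"
proof -
  have "\<exists>B. is_inverse_on S M B"
  proof (rule ex_is_inverse_on_if_inj[OF S])
    fix y assume "\<forall>i\<in>S. mat_apply S M y i = 0"
    then have "c * l2_norm S y \<le> 0"
      using below[of y] l2_norm_eq_0_iff[OF S, of "mat_apply S M y"] by simp
    then show "\<forall>i\<in>S. y i = 0"
      using c l2_norm_nonneg[of S y] l2_norm_eq_0_iff[OF S] by (simp add: mult_le_0_iff)
  qed
  then have B: "is_inverse_on S M (SOME B. is_inverse_on S M B)" by (rule someI_ex)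
  have "fin_opnorm S (SOME B. is_inverse_on S M B) \<le> 1 / c"
  proof (rule fin_opnorm_le)
    fix x assume "l2_norm S x \<le> 1"
    moreover have "l2_norm S (mat_apply S M (mat_apply S (SOME B. is_inverse_on S M B) x)) = l2_norm S x"
      using mat_apply_inverse_on[OF S B] by (rule l2_norm_cong)
    ultimately show "l2_norm S (mat_apply S (SOME B. is_inverse_on S M B) x) \<le> 1 / c"
      using below[of "mat_apply S (SOME B. is_inverse_on S M B) x"] c by (simp add: field_simps)
  qed
  then show ?thesis using B unfolding inv_opnorm_def by auto
qed

lemma bounded_below_diag_plus:
  fixes D :: "'i \<Rightarrow> real"
  assumes S: "finite S"
    and M: "\<And>i k. i \<in> S \<Longrightarrow> k \<in> S \<Longrightarrow> M i k = (if i = k then complex_of_real (D i) else 0) + P i k"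
    and D: "\<And>i. i \<in> S \<Longrightarrow> \<delta> \<le> \<bar>D i\<bar>" and \<delta>: "0 \<le> \<delta>"
    and P: "\<And>y. l2_norm S (mat_apply S P y) \<le> \<rho> * l2_norm S y"
  shows "(\<delta> - \<rho>) * l2_norm S y \<le> l2_norm S (mat_apply S M y)"
proof -
  have split: "complex_of_real (D i) * y i = mat_apply S M y i - mat_apply S P y i" if i: "i \<in> S" for i
  proof -
    have "mat_apply S M y i = (\<Sum>k\<in>S. (if i = k then complex_of_real (D i) * y k else 0) + P i k * y k)"
      using i unfolding mat_apply_def by (intro sum.cong) (auto simp: M distrib_right)
    also have "\<dots> = complex_of_real (D i) * y i + mat_apply S P y i"
      using S i by (simp add: sum.distrib mat_apply_def)
    finally show ?thesis by simp
  qed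
  have "\<delta> * l2_norm S y \<le> l2_norm S (\<lambda>i. complex_of_real (D i) * y i)"
    by (rule l2_norm_mult_left_ge[OF D \<delta>])
  also have "\<dots> = l2_norm S (\<lambda>i. mat_apply S M y i - mat_apply S P y i)"
    by (rule l2_norm_cong) (rule split)
  also have "\<dots> \<le> l2_norm S (mat_apply S M y) + \<rho> * l2_norm S y"
    using l2_norm_diff_le[of S "mat_apply S M y" "mat_apply S P y"] P[of y] by simp
  finally show ?thesis by (simp add: algebra_simps)
qed

lemma l2_norm_mat_apply_le_opnorm0:
  assumes S: "finite S" and y: "l2_norm S y \<le> 1"
  shows "ereal (l2_norm S (mat_apply S T y)) \<le> opnorm0 T"
proof -
  define x where "x k = (if k \<in> S then y k else 0)" for k
  have supp: "{k. x k \<noteq> 0} \<subseteq> S" by (auto simp: x_def)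
  have sum_supp: "(\<Sum>k\<in>{k. x k \<noteq> 0}. F k * x k) = (\<Sum>k\<in>S. F k * y k)" for F :: "_ \<Rightarrow> complex"
    by (rule sum.mono_neutral_left[OF S supp, THEN trans]) (auto simp: x_def)
  have "(\<Sum>k\<in>{k. x k \<noteq> 0}. (cmod (x k))\<^sup>2) = (\<Sum>k\<in>S. (cmod (y k))\<^sup>2)"
    by (rule sum.mono_neutral_left[OF S supp, THEN trans]) (auto simp: x_def)
  also have "\<dots> \<le> 1"
    using y by (simp add: l2_norm_def L2_set_def)
  finally have "(\<Sum>k\<in>{k. x k \<noteq> 0}. (cmod (x k))\<^sup>2) \<le> 1" .
  moreover have "finite {k. x k \<noteq> 0}" using supp S by (rule finite_subset)
  ultimately show ?thesis
    unfolding opnorm0_def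
    by (intro SUP_upper2[of "(x, S)"]) (auto simp: S sum_supp l2_norm_def L2_set_def mat_apply_def)
qed

lemma l2_norm_mat_apply_scaled_le:
  assumes S: "finite S" and eps: "0 \<le> eps" and bound: "ereal eps * opnorm0 T \<le> 1"
  shows "l2_norm S (mat_apply S (\<lambda>i k. complex_of_real eps * T i k) y) \<le> l2_norm S y"
proof (cases "eps = 0 \<or> l2_norm S y = 0")
  case True
  then have "\<forall>i\<in>S. mat_apply S (\<lambda>i k. complex_of_real eps * T i k) y i = 0"
    by (auto simp: mat_apply_def l2_norm_eq_0_iff[OF S])
  then show ?thesis by (simp add: l2_norm_eq_0_iff[OF S, symmetric])
next
  case False
  then have e0: "0 < eps" and r0: "0 < l2_norm S y" using eps by (auto simp: order_less_le)
  define r where "r = l2_norm S y"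
  have scale: "mat_apply S T (\<lambda>k. y k / complex_of_real r) i = mat_apply S T y i / complex_of_real r"
    for i by (simp add: mat_apply_def sum_divide_distrib)
  have "ereal (l2_norm S (mat_apply S T (\<lambda>k. y k / complex_of_real r))) \<le> opnorm0 T"
    using r0 by (intro l2_norm_mat_apply_le_opnorm0[OF S])
      (simp add: r_def divide_inverse mult.commute[of _ "inverse _"] l2_norm_mult_left norm_inverse)
  then have "ereal eps * ereal (l2_norm S (mat_apply S T y) / r) \<le> ereal eps * opnorm0 T"
    using e0 r0 unfolding scale
    by (intro ereal_mult_left_mono)
      (auto simp: r_def divide_inverse mult.commute[of _ "inverse _"] l2_norm_mult_left norm_inverse)
  also have "\<dots> \<le> 1" by (rule bound)
  finally have "eps * l2_norm S (mat_apply S T y) \<le> r" using r0 by (simp add: r_def field_simps)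
  moreover have "mat_apply S (\<lambda>i k. complex_of_real eps * T i k) y
      = (\<lambda>i. complex_of_real eps * mat_apply S T y i)"
    by (simp add: mat_apply_def sum_distrib_left mult.assoc fun_eq_iff)
  ultimately show ?thesis using e0 by (simp add: r_def l2_norm_mult_left)
qed

section \<open>Fourier analysis on the torus\<close>

lemma idot_add: "idot (k + m) y = idot k y + idot m y"
  by (simp add: idot_def sum.distrib distrib_right)

lemma idot_uminus: "idot (- k) y = - idot k y"
  by (simp add: idot_def sum_negf)

lemma idot_eq_inner: "idot k y = (\<chi> i. real_of_int (k $ i)) \<bullet> y"
  by (simp add: idot_def inner_vec_def)

definition fourier_mode :: "int^'d \<Rightarrow> real^'d \<Rightarrow> complex" where
  "fourier_mode k y = exp (\<i> * complex_of_real (idot k y))"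

lemma fourier_mode_mult: "fourier_mode k y * fourier_mode m y = fourier_mode (k + m) y"
  by (simp add: fourier_mode_def idot_add exp_add[symmetric] distrib_left)

lemma fourier_mode_cnj: "cnj (fourier_mode k y) = fourier_mode (- k) y"
  by (simp add: fourier_mode_def idot_uminus exp_cnj)

lemma fourier_mode_mult_cnj: "fourier_mode j y * cnj (fourier_mode k y) = fourier_mode (j - k) y"
  by (simp add: fourier_mode_cnj fourier_mode_mult)

lemma continuous_on_fourier_mode: "continuous_on UNIV (fourier_mode k)"
  unfolding fourier_mode_def idot_eq_inner by (intro continuous_intros)

lemma fourier_mode_eq_prod:
  "fourier_mode k y = (\<Prod>i\<in>UNIV. exp (\<i> * complex_of_real (of_int (k $ i) * y $ i)))"
  unfolding fourier_mode_def idot_def by (simp add: sum_distrib_left exp_sum)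

lemma integral_lborel_prod_Basis:
  fixes f :: "'a::euclidean_space \<Rightarrow> real \<Rightarrow> complex"
  assumes int: "\<And>b. b \<in> Basis \<Longrightarrow> integrable lborel (f b)"
  shows "(\<integral>x. (\<Prod>b\<in>Basis. f b (x \<bullet> b)) \<partial>lborel) = (\<Prod>b\<in>Basis. integral\<^sup>L lborel (f b))"
proof -
  interpret product_sigma_finite "\<lambda>_. lborel::real measure" by standard
  have meas: "f b \<in> borel_measurable borel" if "b \<in> Basis" for b
    using int[OF that] by (simp add: borel_measurable_integrable)
  have m2: "(\<lambda>x. \<Prod>b\<in>Basis. f b (x \<bullet> b)) \<in> borel_measurable borel"
    by (intro borel_measurable_prod measurable_compose[OF _ meas]) auto
  have m1: "(\<lambda>g. \<Sum>b\<in>Basis. g b *\<^sub>R b) \<in> measurable (\<Pi>\<^sub>M b\<in>Basis. (lborel::real measure)) (borel::'a measure)"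
    by measurable
  have "(\<integral>x. (\<Prod>b\<in>Basis. f b (x \<bullet> b)) \<partial>lborel)
      = (\<integral>g. (\<Prod>b\<in>Basis. f b ((\<Sum>b'\<in>Basis. g b' *\<^sub>R b') \<bullet> b)) \<partial>(\<Pi>\<^sub>M b\<in>Basis. lborel))"
    by (subst lborel_eq) (rule integral_distr[OF m1 m2])
  also have "\<dots> = (\<integral>g. (\<Prod>b\<in>Basis. f b (g b)) \<partial>(\<Pi>\<^sub>M b\<in>Basis. lborel))"
    by (intro Bochner_Integration.integral_cong refl prod.cong)
       (simp add: inner_sum_left inner_Basis if_distrib sum.delta cong: if_cong)
  also have "\<dots> = (\<Prod>b\<in>Basis. integral\<^sup>L lborel (f b))"
    by (rule product_integral_prod) (auto intro: int)
  finally show ?thesis .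
qed

lemma integral_lborel_prod_cart:
  fixes f :: "'n::finite \<Rightarrow> real \<Rightarrow> complex"
  assumes int: "\<And>i. integrable lborel (f i)"
  shows "(\<integral>y. (\<Prod>i\<in>UNIV. f i (y $ i)) \<partial>(lborel :: (real^'n) measure))
       = (\<Prod>i\<in>UNIV. integral\<^sup>L lborel (f i))"
proof -
  define ax where "ax i = axis i (1::real)" for i :: 'n
  have inj: "inj ax" by (auto intro!: injI simp: ax_def axis_eq_axis)
  have Basis: "(Basis :: (real^'n) set) = range ax" by (auto simp: Basis_vec_def ax_def)
  define F where "F b = f (inv_into UNIV ax b)" for b
  have Fe: "F (ax i) = f i" for i by (simp add: F_def inv_f_f[OF inj])
  have "\<And>b. b \<in> range ax \<Longrightarrow> integrable lborel (F b)" using int Fe by auto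
  from integral_lborel_prod_Basis[of F, unfolded Basis, OF this]
  show ?thesis
    unfolding prod.reindex[OF inj] comp_def Fe by (simp add: ax_def inner_axis)
qed

lemma integral_exp_int_period:
  fixes n :: int
  shows "(LINT t|lborel. indicator {0..2*pi} t *\<^sub>R exp (\<i> * complex_of_real (of_int n * t)))
         = (if n = 0 then complex_of_real (2*pi) else 0)"
proof -
  have "set_integrable lborel {0..2*pi} (\<lambda>t. exp (\<i> * complex_of_real (of_int n * t)))"
    unfolding set_integrable_def
    by (rule borel_integrable_compact) (auto intro!: continuous_intros)
  then have "(LINT t|lborel. indicator {0..2*pi} t *\<^sub>R exp (\<i> * complex_of_real (of_int n * t)))
      = integral {0..2*pi} (\<lambda>t. exp ((\<i> * of_int n) * complex_of_real t))"
    using set_borel_integral_eq_integral(2) by (simp add: set_lebesgue_integral_def mult.assoc)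
  also have "\<dots> = (if n = 0 then complex_of_real (2*pi) else 0)"
  proof (cases "n = 0")
    case False
    then have "integral {0..2*pi} (\<lambda>t. exp ((\<i> * of_int n) * complex_of_real t))
        = (exp ((\<i> * of_int n) * of_real (2*pi)) - 1) / (\<i> * of_int n)"
      by (intro integral_exp) auto
    also have "exp ((\<i> * of_int n) * of_real (2*pi)) = 1"
      using exp_integer_2pi[of "of_int n"] by (simp add: mult_ac)
    finally show ?thesis using False by simp
  qed (simp add: scaleR_conv_of_real)
  finally show ?thesis .
qed

lemma indicator_tcube_eq_prod:
  "indicator (tcube :: (real^'n) set) y = (\<Prod>i\<in>UNIV. indicator {0..2*pi} (y $ i) :: real)"
proof (cases "y \<in> tcube")
  case False
  then obtain i where "y $ i \<notin> {0..2*pi}"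
    by (auto simp: tcube_def mem_box_cart)
  then have "(\<Prod>i\<in>UNIV. indicator {0..2*pi} (y $ i) :: real) = 0"
    by (intro prod_zero bexI[of _ i]) auto
  then show ?thesis using False by simp
qed (auto simp: tcube_def mem_box_cart)

definition torus_integral :: "(real^'d \<Rightarrow> 'a::{banach, second_countable_topology}) \<Rightarrow> 'a" where
  "torus_integral g = set_lebesgue_integral lborel (tcube :: (real^'d) set) g"

lemma torus_integral_fourier_mode:
  fixes k :: "int^'d"
  shows "torus_integral (fourier_mode k) = (if k = 0 then complex_of_real ((2*pi)^CARD('d)) else 0)"
proof -
  define \<phi> where "\<phi> n t = indicator {0..2*pi} t *\<^sub>R exp (\<i> * complex_of_real (of_int n * t))"
    for n :: int and t :: real
  have "torus_integral (fourier_mode k) = (LINT y|lborel. (\<Prod>i\<in>UNIV. \<phi> (k $ i) (y $ i)))"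
    unfolding torus_integral_def set_lebesgue_integral_def \<phi>_def indicator_tcube_eq_prod
      fourier_mode_eq_prod scaleR_conv_of_real
    by (simp add: prod.distrib)
  also have "\<dots> = (\<Prod>i\<in>UNIV. integral\<^sup>L lborel (\<phi> (k $ i)))"
    unfolding \<phi>_def
    by (intro integral_lborel_prod_cart borel_integrable_compact) (auto intro!: continuous_intros)
  also have "\<dots> = (\<Prod>i\<in>UNIV. (if k $ i = 0 then complex_of_real (2*pi) else 0))"
    unfolding \<phi>_def by (intro prod.cong refl integral_exp_int_period)
  also have "\<dots> = (if k = 0 then complex_of_real ((2*pi)^CARD('d)) else 0)"
  proof (cases "k = 0")
    case False
    then obtain i where "k $ i \<noteq> 0" by (auto simp: Finite_Cartesian_Product.vec_eq_iff)
    then show ?thesis using False by (auto intro!: prod_zero bexI[of _ i])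
  qed (simp add: of_real_power)
  finally show ?thesis .
qed

lemma set_integrable_tcube:
  fixes g :: "real^'d \<Rightarrow> 'a::{banach, second_countable_topology}"
  shows "continuous_on UNIV g \<Longrightarrow> set_integrable lborel (tcube :: (real^'d) set) g"
  unfolding set_integrable_def tcube_def
  by (rule borel_integrable_compact) (auto intro: continuous_on_subset)

lemma torus_integral_add:
  fixes f g :: "real^'d \<Rightarrow> 'a::euclidean_space"
  shows "continuous_on UNIV f \<Longrightarrow> continuous_on UNIV g
    \<Longrightarrow> torus_integral (\<lambda>y. f y + g y) = torus_integral f + torus_integral g"
  unfolding torus_integral_def by (intro set_integral_add(2) set_integrable_tcube)

lemma torus_integral_diff:
  fixes f g :: "real^'d \<Rightarrow> 'a::euclidean_space"
  shows "continuous_on UNIV f \<Longrightarrow> continuous_on UNIV g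
    \<Longrightarrow> torus_integral (\<lambda>y. f y - g y) = torus_integral f - torus_integral g"
  unfolding torus_integral_def by (intro set_integral_diff(2) set_integrable_tcube)

lemma torus_integral_mult_left:
  fixes f :: "real^'d \<Rightarrow> 'a::{real_normed_field, second_countable_topology, banach}"
  shows "torus_integral (\<lambda>y. c * f y) = c * torus_integral f"
  unfolding torus_integral_def by (rule set_integral_mult_right)

lemma torus_integral_sum:
  fixes f :: "'j \<Rightarrow> real^'d \<Rightarrow> 'a::euclidean_space"
  assumes "finite J" "\<And>j. continuous_on UNIV (f j)"
  shows "torus_integral (\<lambda>y. \<Sum>j\<in>J. f j y) = (\<Sum>j\<in>J. torus_integral (f j))"
  using assms(1)
proof (induction J rule: finite_induct)
  case (insert a F)
  then show ?case
    by (simp add: torus_integral_add assms(2) continuous_on_sum)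
qed (simp add: torus_integral_def)

lemma torus_integral_cnj: "torus_integral (\<lambda>y. cnj (f y)) = cnj (torus_integral f)"
  unfolding torus_integral_def set_lebesgue_integral_def
  by (simp only: complex_cnj_scaleR[symmetric] Bochner_Integration.integral_cnj)

lemma torus_integral_of_real:
  "torus_integral (\<lambda>y. complex_of_real (g y)) = complex_of_real (torus_integral g)"
  unfolding torus_integral_def by (rule set_integral_complex_of_real)

lemma torus_integral_nonneg:
  fixes g :: "real^'d \<Rightarrow> real"
  shows "(\<And>y. 0 \<le> g y) \<Longrightarrow> 0 \<le> torus_integral g"
  unfolding torus_integral_def set_lebesgue_integral_def
  by (intro Bochner_Integration.integral_nonneg) (simp add: indicator_def)

lemma torus_integral_mono:
  fixes f g :: "real^'d \<Rightarrow> real"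
  assumes "continuous_on UNIV f" "continuous_on UNIV g" "\<And>y. y \<in> tcube \<Longrightarrow> f y \<le> g y"
  shows "torus_integral f \<le> torus_integral g"
  unfolding torus_integral_def using assms by (intro set_integral_mono set_integrable_tcube)

lemma fcoef1_eq_torus_integral:
  fixes g :: "real^'d \<Rightarrow> complex"
  shows "fcoef1 g j = torus_integral (\<lambda>y. g y * fourier_mode (- j) y) / complex_of_real ((2*pi)^CARD('d))"
  unfolding fcoef1_def torus_integral_def fourier_mode_def idot_uminus
  by (simp add: field_simps)

lemma torus_integral_trig_poly_cnj:
  fixes c a :: "int^'d \<Rightarrow> complex"
  assumes J: "finite J"
  shows "torus_integral (\<lambda>y. (\<Sum>j\<in>J. c j * fourier_mode j y) * cnj (\<Sum>k\<in>J. a k * fourier_mode k y))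
       = complex_of_real ((2*pi)^CARD('d)) * (\<Sum>j\<in>J. c j * cnj (a j))"
proof -
  have "(\<Sum>j\<in>J. c j * fourier_mode j y) * cnj (\<Sum>k\<in>J. a k * fourier_mode k y)
      = (\<Sum>j\<in>J. \<Sum>k\<in>J. (c j * cnj (a k)) * fourier_mode (j - k) y)" for y
  proof -
    have "(\<Sum>j\<in>J. c j * fourier_mode j y) * cnj (\<Sum>k\<in>J. a k * fourier_mode k y)
        = (\<Sum>j\<in>J. \<Sum>k\<in>J. (c j * cnj (a k)) * (fourier_mode j y * cnj (fourier_mode k y)))"
      by (simp add: sum_product mult_ac)
    then show ?thesis by (simp only: fourier_mode_mult_cnj)
  qed
  then have "torus_integral (\<lambda>y. (\<Sum>j\<in>J. c j * fourier_mode j y) * cnj (\<Sum>k\<in>J. a k * fourier_mode k y))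
      = (\<Sum>j\<in>J. \<Sum>k\<in>J. (c j * cnj (a k)) * torus_integral (fourier_mode (j - k)))"
    by (simp add: torus_integral_sum J continuous_on_sum continuous_on_fourier_mode
        continuous_on_mult_left torus_integral_mult_left)
  also have "\<dots> = (\<Sum>j\<in>J. \<Sum>k\<in>J. if k = j then c j * cnj (a j) * complex_of_real ((2*pi)^CARD('d)) else 0)"
    by (intro sum.cong refl) (auto simp: torus_integral_fourier_mode)
  finally show ?thesis
    using J by (simp add: sum_distrib_left mult_ac)
qed

lemma bessel_inequality:
  fixes G :: "real^'d \<Rightarrow> complex"
  assumes G: "continuous_on UNIV G" and J: "finite J"
  shows "(2*pi)^CARD('d) * (\<Sum>j\<in>J. (cmod (fcoef1 G j))\<^sup>2) \<le> torus_integral (\<lambda>y. (cmod (G y))\<^sup>2)"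
proof -
  define P :: real where "P = (2*pi)^CARD('d)"
  define Z where "Z y = (\<Sum>j\<in>J. fcoef1 G j * fourier_mode j y)" for y
  define Q where "Q = P * (\<Sum>j\<in>J. (cmod (fcoef1 G j))\<^sup>2)"
  have sq: "\<And>z. z * cnj z = complex_of_real ((cmod z)\<^sup>2)"
    using complex_norm_square by metis
  have cZ: "continuous_on UNIV Z"
    unfolding Z_def by (intro continuous_on_sum continuous_on_mult_left continuous_on_fourier_mode)
  have GZ: "torus_integral (\<lambda>y. G y * cnj (Z y)) = complex_of_real Q"
  proof -
    have "G y * cnj (Z y) = (\<Sum>j\<in>J. cnj (fcoef1 G j) * (G y * fourier_mode (- j) y))" for y
      by (simp add: Z_def sum_distrib_left fourier_mode_cnj mult_ac)
    then have "torus_integral (\<lambda>y. G y * cnj (Z y))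
        = (\<Sum>j\<in>J. cnj (fcoef1 G j) * torus_integral (\<lambda>y. G y * fourier_mode (- j) y))"
      by (simp add: torus_integral_sum J continuous_on_mult_left continuous_on_mult G
          continuous_on_fourier_mode torus_integral_mult_left)
    also have "\<dots> = (\<Sum>j\<in>J. complex_of_real P * (fcoef1 G j * cnj (fcoef1 G j)))"
      by (simp add: fcoef1_eq_torus_integral P_def mult_ac)
    also have "\<dots> = (\<Sum>j\<in>J. complex_of_real P * complex_of_real ((cmod (fcoef1 G j))\<^sup>2))"
      by (simp only: sq)
    finally show ?thesis by (simp add: Q_def sum_distrib_left)
  qed
  have ZG: "torus_integral (\<lambda>y. Z y * cnj (G y)) = complex_of_real Q"
    using arg_cong[OF GZ, of cnj] by (simp add: torus_integral_cnj[symmetric] mult.commute)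
  have ZZ: "torus_integral (\<lambda>y. Z y * cnj (Z y)) = complex_of_real Q"
    unfolding Z_def by (subst torus_integral_trig_poly_cnj[OF J]) (simp add: Q_def P_def sq sum_distrib_left)
  have GG: "torus_integral (\<lambda>y. G y * cnj (G y)) = complex_of_real (torus_integral (\<lambda>y. (cmod (G y))\<^sup>2))"
    by (simp only: sq torus_integral_of_real)
  have "complex_of_real (torus_integral (\<lambda>y. (cmod (G y - Z y))\<^sup>2))
      = torus_integral (\<lambda>y. (G y - Z y) * cnj (G y - Z y))"
    by (simp only: torus_integral_of_real[symmetric] sq)
  also have "\<dots> = torus_integral (\<lambda>y. (G y * cnj (G y) - G y * cnj (Z y)) - (Z y * cnj (G y) - Z y * cnj (Z y)))"
    by (rule arg_cong[where f=torus_integral]) (simp add: fun_eq_iff algebra_simps)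
  also have "\<dots> = complex_of_real (torus_integral (\<lambda>y. (cmod (G y))\<^sup>2) - Q)"
    using G cZ
    by (simp add: torus_integral_diff continuous_on_mult continuous_on_diff continuous_on_cnj GZ ZG ZZ
        GG)
  finally have "torus_integral (\<lambda>y. (cmod (G y - Z y))\<^sup>2) = torus_integral (\<lambda>y. (cmod (G y))\<^sup>2) - Q"
    by (simp only: of_real_eq_iff)
  moreover have "0 \<le> torus_integral (\<lambda>y. (cmod (G y - Z y))\<^sup>2)"
    by (rule torus_integral_nonneg) simp
  ultimately show ?thesis by (simp add: Q_def P_def)
qed

text \<open>Multiplication by \<open>g\<close>, seen on Fourier coefficients, is convolution with \<open>fcoef1 g\<close>;
  Bessel's inequality for \<open>g\<close> times a trigonometric polynomial bounds it by \<open>sup |g|\<close>.\<close>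
lemma fcoef1_convolution_le:
  fixes g :: "real^'d \<Rightarrow> complex" and x :: "int^'d \<Rightarrow> complex"
  assumes g: "continuous_on UNIV g" and bound: "\<And>y. y \<in> tcube \<Longrightarrow> cmod (g y) \<le> M" and J: "finite J"
  shows "(\<Sum>j\<in>J. (cmod (\<Sum>k\<in>J. fcoef1 g (j - k) * x k))\<^sup>2) \<le> M\<^sup>2 * (\<Sum>k\<in>J. (cmod (x k))\<^sup>2)"
proof -
  define P :: real where "P = (2*pi)^CARD('d)"
  define Y where "Y y = (\<Sum>k\<in>J. x k * fourier_mode k y)" for y
  have cY: "continuous_on UNIV Y"
    unfolding Y_def by (intro continuous_on_sum continuous_on_mult_left continuous_on_fourier_mode)
  have cgY: "continuous_on UNIV (\<lambda>y. g y * Y y)" using g cY by (rule continuous_on_mult)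
  have coef: "fcoef1 (\<lambda>y. g y * Y y) j = (\<Sum>k\<in>J. fcoef1 g (j - k) * x k)" for j
  proof -
    have "g y * Y y * fourier_mode (- j) y = (\<Sum>k\<in>J. x k * (g y * fourier_mode (- (j - k)) y))" for y
      by (simp add: Y_def sum_distrib_left sum_distrib_right mult_ac fourier_mode_mult)
    then have "torus_integral (\<lambda>y. g y * Y y * fourier_mode (- j) y)
        = (\<Sum>k\<in>J. x k * torus_integral (\<lambda>y. g y * fourier_mode (- (j - k)) y))"
      by (simp add: torus_integral_sum J continuous_on_mult_left continuous_on_mult g
          continuous_on_fourier_mode torus_integral_mult_left)
    then show ?thesis
      by (simp add: fcoef1_eq_torus_integral sum_divide_distrib mult_ac)
  qed
  have "P * (\<Sum>j\<in>J. (cmod (fcoef1 (\<lambda>y. g y * Y y) j))\<^sup>2) \<le> torus_integral (\<lambda>y. (cmod (g y * Y y))\<^sup>2)"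
    unfolding P_def by (rule bessel_inequality[OF cgY J])
  also have "\<dots> \<le> torus_integral (\<lambda>y. M\<^sup>2 * (cmod (Y y))\<^sup>2)"
  proof (rule torus_integral_mono)
    fix y :: "real^'d" assume "y \<in> tcube"
    then have "(cmod (g y))\<^sup>2 \<le> M\<^sup>2" using bound by (simp add: power_mono)
    then show "(cmod (g y * Y y))\<^sup>2 \<le> M\<^sup>2 * (cmod (Y y))\<^sup>2"
      by (simp add: norm_mult power_mult_distrib mult_right_mono)
  qed (use g cY in \<open>auto intro!: continuous_intros\<close>)
  also have "\<dots> = M\<^sup>2 * (P * (\<Sum>k\<in>J. (cmod (x k))\<^sup>2))"
  proof -
    have "complex_of_real (torus_integral (\<lambda>y. (cmod (Y y))\<^sup>2)) = torus_integral (\<lambda>y. Y y * cnj (Y y))"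
      by (simp only: torus_integral_of_real[symmetric] complex_norm_square)
    also have "\<dots> = complex_of_real (P * (\<Sum>k\<in>J. (cmod (x k))\<^sup>2))"
      unfolding Y_def P_def torus_integral_trig_poly_cnj[OF J]
      by (simp only: complex_norm_square[symmetric] of_real_mult of_real_sum)
    finally have "torus_integral (\<lambda>y. (cmod (Y y))\<^sup>2) = P * (\<Sum>k\<in>J. (cmod (x k))\<^sup>2)"
      by (simp only: of_real_eq_iff)
    then show ?thesis by (simp add: torus_integral_mult_left)
  qed
  finally show ?thesis
    unfolding coef P_def by (simp add: mult.left_commute[of "(2*pi)^_"])
qed

section \<open>The truncated operator\<close>

lemma maxnorm_le_iff: "maxnorm (k::int^'n::finite) \<le> c \<longleftrightarrow> (\<forall>i. \<bar>k $ i\<bar> \<le> c)"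
  unfolding maxnorm_def by (subst Max_le_iff) auto

lemma maxnorm_less_iff: "maxnorm (k::int^'n::finite) < c \<longleftrightarrow> (\<forall>i. \<bar>k $ i\<bar> < c)"
  unfolding maxnorm_def by (subst Max_less_iff) auto

lemma finite_maxnorm_le: "finite {k::int^'n::finite. maxnorm (k - k0) \<le> c}"
proof (rule finite_subset)
  show "{k. maxnorm (k - k0) \<le> c} \<subseteq> (\<lambda>g. (\<chi> i. g i) + k0) ` (PiE UNIV (\<lambda>_. {-c..c}))"
  proof
    fix k assume "k \<in> {k. maxnorm (k - k0) \<le> c}"
    then have bound: "\<bar>(k - k0) $ i\<bar> \<le> c" for i by (simp add: maxnorm_le_iff)
    have "(k - k0) $ i \<in> {-c..c}" for i using bound[of i] by (simp add: abs_le_iff)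
    then have "(\<lambda>i. (k - k0) $ i) \<in> PiE UNIV (\<lambda>_. {-c..c})" by (simp add: PiE_iff)
    then show "k \<in> (\<lambda>g. (\<chi> i. g i) + k0) ` (PiE UNIV (\<lambda>_. {-c..c}))"
      by (rule rev_image_eqI) (simp add: Finite_Cartesian_Product.vec_eq_iff)
  qed
qed (auto intro!: finite_imageI finite_PiE)

lemma trunc_eq_product:
  "trunc N j0 = {l. maxnorm l \<le> int N} \<times> {j. maxnorm (j - j0) \<le> int N} \<times> UNIV"
  by (auto simp: trunc_def)

lemma finite_trunc: "finite (trunc N j0)"
  unfolding trunc_eq_product using finite_maxnorm_le[of 0 "int N"] finite_maxnorm_le[of j0 "int N"]
  by auto

lemma sum_idx_product:
  fixes F :: "('v::finite, 'd::finite) idx \<Rightarrow> 'b::comm_monoid_add"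
  assumes "finite L" "finite J"
  shows "(\<Sum>i\<in>L \<times> J \<times> UNIV. F i) = (\<Sum>l\<in>L. \<Sum>a\<in>UNIV. \<Sum>j\<in>J. F (l, j, a))"
proof -
  have "(\<Sum>i\<in>L \<times> J \<times> UNIV. F i) = (\<Sum>l\<in>L. \<Sum>j\<in>J. \<Sum>a\<in>UNIV. F (l, j, a))"
    by (simp add: sum.cartesian_product)
  also have "\<dots> = (\<Sum>l\<in>L. \<Sum>a\<in>UNIV. \<Sum>j\<in>J. F (l, j, a))"
    by (intro sum.cong refl sum.swap)
  finally show ?thesis .
qed

lemma mat_apply_T2:
  fixes V :: "real^'d::finite \<Rightarrow> real" and y :: "('v::finite, 'd) idx \<Rightarrow> complex"
  assumes "finite L" "finite J" "l \<in> L"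
  shows "mat_apply (L \<times> J \<times> UNIV) (T2 V) y (l, j, a)
       = (\<Sum>j'\<in>J. fcoef1 (\<lambda>z. complex_of_real (V z - avg V)) (j - j') * y (l, j', a))"
proof -
  define c where "c = fcoef1 (\<lambda>z. complex_of_real (V z - avg V))"
  define r where "r = (\<Sum>j'\<in>J. c (j - j') * y (l, j', a))"
  have "mat_apply (L \<times> J \<times> UNIV) (T2 V) y (l, j, a)
      = (\<Sum>l'\<in>L. \<Sum>a'\<in>UNIV. if l' = l \<and> a' = a then r else 0)"
    unfolding mat_apply_def sum_idx_product[OF assms(1,2)] r_def
    by (intro sum.cong refl) (auto simp: T2_def c_def)
  also have "\<dots> = (\<Sum>l'\<in>L. if l' = l then r else 0)"
    by (intro sum.cong refl) auto
  finally show ?thesis using assms by (simp add: r_def c_def)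
qed

lemma l2_norm_T2_le:
  fixes V :: "real^'d::finite \<Rightarrow> real" and y :: "('v::finite, 'd) idx \<Rightarrow> complex"
  assumes V: "continuous_on UNIV V"
    and bound: "\<And>z. z \<in> tcube \<Longrightarrow> \<bar>V z - avg V\<bar> \<le> M" and M: "0 \<le> M"
    and L: "finite L" and J: "finite J"
  shows "l2_norm (L \<times> J \<times> UNIV) (mat_apply (L \<times> J \<times> UNIV) (T2 V) y)
       \<le> M * l2_norm (L \<times> J \<times> UNIV) y"
proof -
  define c where "c = fcoef1 (\<lambda>z. complex_of_real (V z - avg V))"
  have "(l2_norm (L \<times> J \<times> UNIV) (mat_apply (L \<times> J \<times> UNIV) (T2 V) y))\<^sup>2
      = (\<Sum>l\<in>L. \<Sum>a\<in>UNIV. \<Sum>j\<in>J. (cmod (\<Sum>j'\<in>J. c (j - j') * y (l, j', a)))\<^sup>2)"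
    unfolding l2_norm_power2 sum_idx_product[OF L J] c_def
    by (intro sum.cong refl) (simp add: mat_apply_T2[OF L J])
  also have "\<dots> \<le> (\<Sum>l\<in>L. \<Sum>a\<in>UNIV. M\<^sup>2 * (\<Sum>j\<in>J. (cmod (y (l, j, a)))\<^sup>2))"
    unfolding c_def using V bound
    by (intro sum_mono fcoef1_convolution_le[OF _ _ J]) (auto intro!: continuous_intros simp flip: of_real_diff)
  also have "\<dots> = (M * l2_norm (L \<times> J \<times> UNIV) y)\<^sup>2"
    by (simp add: power_mult_distrib l2_norm_power2 sum_idx_product[OF L J] sum_distrib_left)
  finally show ?thesis
    using M by (auto intro: power2_le_imp_le)
qed

lemma abs_idot_le:
  fixes l :: "int^'v::finite" and w :: "real^'v"
  assumes "maxnorm l \<le> int N" and "\<And>i. \<bar>w $ i\<bar> \<le> C"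
  shows "\<bar>idot l w\<bar> \<le> real CARD('v) * real N * C"
proof -
  have "\<bar>idot l w\<bar> \<le> (\<Sum>i\<in>UNIV. \<bar>real_of_int (l $ i)\<bar> * \<bar>w $ i\<bar>)"
    unfolding idot_def by (rule sum_abs[THEN order_trans]) (simp add: abs_mult)
  also have "\<dots> \<le> (\<Sum>i\<in>(UNIV::'v set). real N * C)"
  proof (rule sum_mono)
    fix i
    have "\<bar>l $ i\<bar> \<le> int N" using assms(1) by (simp add: maxnorm_le_iff)
    then have "\<bar>real_of_int (l $ i)\<bar> \<le> real N" by linarith
    then show "\<bar>real_of_int (l $ i)\<bar> * \<bar>w $ i\<bar> \<le> real N * C"
      using assms(2)[of i] by (intro mult_mono) auto
  qed
  finally show ?thesis by simp
qed

lemma sqnorm_le: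
  fixes j j0 :: "int^'d::finite"
  assumes "maxnorm (j - j0) \<le> int N" and "maxnorm j0 < 2 * int N"
  shows "real_of_int (sqnorm j) \<le> 9 * real CARD('d) * (real N)\<^sup>2"
proof -
  have "\<bar>j $ i\<bar> \<le> 3 * int N" for i
    using assms by (auto simp: maxnorm_le_iff maxnorm_less_iff dest!: spec[of _ i])
  then have "(j $ i)\<^sup>2 \<le> (3 * int N)\<^sup>2" for i
    by (metis abs_le_square_iff abs_of_nonneg of_nat_0_le_iff zero_le_mult_iff zero_le_numeral)
  then have "sqnorm j \<le> (\<Sum>i\<in>(UNIV::'d set). (3 * int N)\<^sup>2)"
    unfolding sqnorm_def by (intro sum_mono)
  also have "\<dots> = 9 * int CARD('d) * (int N)\<^sup>2" by (simp add: power_mult_distrib)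
  finally have "real_of_int (sqnorm j) \<le> real_of_int (9 * int CARD('d) * (int N)\<^sup>2)"
    by (simp only: of_int_le_iff)
  then show ?thesis by simp
qed

definition Adiag :: "(real^'d \<Rightarrow> real) \<Rightarrow> real^'v \<Rightarrow> real \<Rightarrow> real \<Rightarrow> ('v, 'd) idx \<Rightarrow> real" where
  "Adiag V ombar lam theta = (\<lambda>(l, j, a). (if a then 1 else -1) * idot l (lam *\<^sub>R ombar)
      + of_int (sqnorm j) + avg V + theta * (if a then 1 else -1))"

lemma Aop_eq_diag_plus:
  "Aop V ombar f u eps lam theta i k
    = (if i = k then complex_of_real (Adiag V ombar lam theta i) else 0)
      + (T2 V i k - complex_of_real eps * T1 f (u eps lam) i k)"
  by (cases i; cases k) (simp add: Aop_def Adiag_def)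

lemma abs_Adiag_ge:
  fixes V :: "real^'d::finite \<Rightarrow> real" and ombar :: "real^'v::finite"
  assumes i: "i \<in> trunc N j0" and j0: "maxnorm j0 < 2 * int N"
    and ombar: "\<And>i. \<bar>ombar $ i\<bar> \<le> 1" and lam: "lam \<in> {1/2..3/2}"
    and theta: "11 * real CARD('d) * (real N)\<^sup>2 \<le> \<bar>theta\<bar>"
  shows "2 * real CARD('d) * (real N)\<^sup>2 - 3/2 * real CARD('v) * real N - \<bar>avg V\<bar>
       \<le> \<bar>Adiag V ombar lam theta i\<bar>"
proof -
  obtain l j a where ijl: "i = (l, j, a)" and l: "maxnorm l \<le> int N" and j: "maxnorm (j - j0) \<le> int N"
    using i by (auto simp: trunc_def)
  have "\<bar>lam * ombar $ k\<bar> \<le> 3/2 * 1" for k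
    using lam ombar[of k] unfolding abs_mult by (intro mult_mono) auto
  then have w: "\<bar>idot l (lam *\<^sub>R ombar)\<bar> \<le> 3/2 * real CARD('v) * real N"
    using abs_idot_le[OF l, of "lam *\<^sub>R ombar" "3/2"] by (simp add: mult_ac)
  have s: "0 \<le> real_of_int (sqnorm j)" "real_of_int (sqnorm j) \<le> 9 * real CARD('d) * (real N)\<^sup>2"
    using sqnorm_le[OF j j0] by (auto simp: sqnorm_def sum_nonneg)
  show ?thesis
    using w s theta unfolding ijl Adiag_def by (cases a) (auto simp: abs_if split: if_splits)
qed

lemma l2_norm_Aop_offdiag_le:
  fixes V :: "real^'d::finite \<Rightarrow> real" and y :: "('v::finite, 'd) idx \<Rightarrow> complex"
  assumes V: "continuous_on UNIV V"
    and bound: "\<And>z. z \<in> tcube \<Longrightarrow> \<bar>V z - avg V\<bar> \<le> M" and M: "0 \<le> M"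
    and eps: "0 \<le> eps" and T1: "ereal eps * opnorm0 T \<le> 1"
  shows "l2_norm (trunc N j0) (mat_apply (trunc N j0) (\<lambda>i k. T2 V i k - complex_of_real eps * T i k) y)
       \<le> (M + 1) * l2_norm (trunc N j0) y"
proof -
  let ?S = "trunc N j0 :: ('v, 'd) idx set"
  have "mat_apply ?S (\<lambda>i k. T2 V i k - complex_of_real eps * T i k) y
      = (\<lambda>i. mat_apply ?S (T2 V) y i - mat_apply ?S (\<lambda>i k. complex_of_real eps * T i k) y i)"
    by (simp add: mat_apply_def fun_eq_iff left_diff_distrib sum_subtractf)
  then have "l2_norm ?S (mat_apply ?S (\<lambda>i k. T2 V i k - complex_of_real eps * T i k) y)
      \<le> l2_norm ?S (mat_apply ?S (T2 V) y) + l2_norm ?S (mat_apply ?S (\<lambda>i k. complex_of_real eps * T i k) y)"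
    by (simp add: l2_norm_diff_le)
  also have "\<dots> \<le> M * l2_norm ?S y + l2_norm ?S y"
  proof (rule add_mono)
    show "l2_norm ?S (mat_apply ?S (T2 V) y) \<le> M * l2_norm ?S y"
      unfolding trunc_eq_product
      using finite_maxnorm_le[of 0 "int N"] finite_maxnorm_le[of j0 "int N"]
      by (intro l2_norm_T2_le[OF V bound M]) auto
    show "l2_norm ?S (mat_apply ?S (\<lambda>i k. complex_of_real eps * T i k) y) \<le> l2_norm ?S y"
      by (rule l2_norm_mat_apply_scaled_le[OF finite_trunc eps T1])
  qed
  finally show ?thesis by (simp add: algebra_simps)
qed

lemma B02_subset_if_large:
  fixes V :: "real^'d::finite \<Rightarrow> real" and ombar :: "real^'v::finite"
    and f :: "real^'v \<Rightarrow> real^'d \<Rightarrow> real \<Rightarrow> real"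
    and u :: "real \<Rightarrow> real \<Rightarrow> real^'v \<Rightarrow> real^'d \<Rightarrow> complex"
  assumes V: "continuous_on UNIV V"
    and bound: "\<And>z. z \<in> tcube \<Longrightarrow> \<bar>V z - avg V\<bar> \<le> M" and M: "0 \<le> M"
    and N: "real CARD('v) + \<bar>avg V\<bar> + M + 3 \<le> real N"
    and tau: "0 < \<tau>" and ombar: "\<And>i. \<bar>ombar $ i\<bar> \<le> 1" and lam: "lam \<in> {1/2..3/2}"
    and eps: "0 \<le> eps" and T1: "ereal eps * opnorm0 (T1 f (u eps lam)) \<le> 1"
    and j0: "maxnorm j0 < 2 * int N"
  shows "B02 \<tau> V ombar f u N j0 eps lam
       \<subseteq> {- 11 * real CARD('d) * real N ^ 2 <..< 11 * real CARD('d) * real N ^ 2}"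
proof
  fix \<theta> assume \<theta>: "\<theta> \<in> B02 \<tau> V ombar f u N j0 eps lam"
  define S where "S = (trunc N j0 :: ('v, 'd) idx set)"
  define \<delta> where "\<delta> = 2 * real CARD('d) * (real N)\<^sup>2 - 3/2 * real CARD('v) * real N - \<bar>avg V\<bar>"
  have gap: "2 \<le> \<delta> - (M + 1)"
  proof -
    have d: "1 \<le> real CARD('d)" by (simp add: Suc_le_eq)
    have N1: "1 \<le> real N" using N M by linarith
    define c where "c = \<bar>avg V\<bar> + M + 3"
    define A where "A = real N * real N"
    have "real N * real CARD('v) + real N * c \<le> A"
      unfolding A_def c_def distrib_left[symmetric] using N by (intro mult_left_mono) auto
    moreover have "1 * c \<le> real N * c"
      unfolding c_def using N1 M by (intro mult_right_mono) auto
    moreover have "1 * A \<le> real CARD('d) * A"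
      unfolding A_def using d by (intro mult_right_mono) auto
    moreover have "0 \<le> real N * real CARD('v)" by simp
    moreover have "\<delta> = 2 * (real CARD('d) * A) - 3/2 * (real N * real CARD('v)) - \<bar>avg V\<bar>"
      unfolding \<delta>_def A_def by (simp add: power2_eq_square mult_ac)
    ultimately show ?thesis using M abs_ge_zero[of "avg V"] c_def by linarith
  qed
  show "\<theta> \<in> {- 11 * real CARD('d) * real N ^ 2 <..< 11 * real CARD('d) * real N ^ 2}"
  proof (rule ccontr)
    assume "\<theta> \<notin> {- 11 * real CARD('d) * real N ^ 2 <..< 11 * real CARD('d) * real N ^ 2}"
    then have large: "11 * real CARD('d) * (real N)\<^sup>2 \<le> \<bar>\<theta>\<bar>" by auto
    have "(\<delta> - (M + 1)) * l2_norm S y \<le> l2_norm S (mat_apply S (Aop V ombar f u eps lam \<theta>) y)" for y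
      unfolding S_def
      using gap M abs_Adiag_ge[OF _ j0 ombar lam large, where V = V, folded \<delta>_def]
      by (intro bounded_below_diag_plus[OF finite_trunc Aop_eq_diag_plus]
          l2_norm_Aop_offdiag_le[OF V bound M eps T1]) auto
    then have "inv_opnorm S (Aop V ombar f u eps lam \<theta>) \<le> ereal (1 / (\<delta> - (M + 1)))"
      using gap unfolding S_def by (intro inv_opnorm_le_if_bounded_below[OF finite_trunc]) auto
    also have "1 / (\<delta> - (M + 1)) \<le> real N powr \<tau> / 2"
    proof -
      have "1 / (\<delta> - (M + 1)) \<le> 1 / 2" using gap by (simp add: field_simps)
      moreover have "1 \<le> real N powr \<tau>" using N M tau by (intro ge_one_powr_ge_zero) auto
      ultimately show ?thesis by simp
    qed
    finally show False
      using \<theta> unfolding B02_def S_def by simp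
  qed
qed

lemma Ck_imp_continuous_on: "Ck r g \<Longrightarrow> continuous_on UNIV g"
  by (cases r) (auto intro: differentiable_imp_continuous_on)

lemma continuous_bounded_on_tcube:
  fixes g :: "real^'d \<Rightarrow> real"
  assumes "continuous_on UNIV g"
  obtains M where "0 \<le> M" "\<And>z. z \<in> tcube \<Longrightarrow> \<bar>g z\<bar> \<le> M"
proof -
  have "compact (g ` tcube)"
    using assms by (intro compact_continuous_image) (auto simp: tcube_def intro: continuous_on_subset)
  then obtain B where "\<forall>x\<in>g ` tcube. norm x \<le> B"
    by (auto dest!: compact_imp_bounded simp: bounded_iff)
  then show ?thesis
    by (intro that[of "max B 0"]) auto
qed

theorem lemma6p7:
  fixes V :: "real^'d \<Rightarrow> real" and r :: nat
  assumes "periodic1 V" and "Ck r V"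
  shows "\<exists>N0::nat. \<forall>(ombar::real^'v) (\<tau>::real) (eps0::real)
      (f::real^'v \<Rightarrow> real^'d \<Rightarrow> real \<Rightarrow> real)
      (u::real \<Rightarrow> real \<Rightarrow> real^'v \<Rightarrow> real^'d \<Rightarrow> complex) (s::real).
     \<tau> > 0 \<and> eps0 > 0 \<and> (\<forall>i. \<bar>ombar $ i\<bar> \<le> 1) \<and>
     (\<forall>t. periodic2 (\<lambda>x y. f x y t)) \<and> Ck r (\<lambda>z. f (fst z) (fst (snd z)) (snd (snd z))) \<and>
     s > real (CARD('v) + CARD('d)) / 2 \<and>
     (\<forall>eps\<in>{0..eps0}. \<forall>lam\<in>{1/2..3/2}. in_Hs s (u eps lam)) \<and>
     (\<forall>eps\<in>{0..eps0}. \<forall>lam\<in>{1/2..3/2}. ereal eps * opnorm0 (T1 f (u eps lam)) \<le> 1)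
     \<longrightarrow> (\<forall>N j0 eps lam. N \<ge> N0 \<and> maxnorm j0 < 2 * int N \<and> eps \<in> {0..eps0} \<and> lam \<in> {1/2..3/2}
            \<longrightarrow> B02 \<tau> V ombar f u N j0 eps lam
                  \<subseteq> {- 11 * real CARD('d) * real N ^ 2 <..< 11 * real CARD('d) * real N ^ 2})"
proof -
  have V: "continuous_on UNIV V" using assms(2) by (rule Ck_imp_continuous_on)
  have "continuous_on UNIV (\<lambda>z. V z - avg V)" using V by (intro continuous_intros)
  then obtain M where M: "0 \<le> M" "\<And>z. z \<in> tcube \<Longrightarrow> \<bar>V z - avg V\<bar> \<le> M"
    by (rule continuous_bounded_on_tcube) blast
  define N0 :: nat where "N0 = nat \<lceil>real CARD('v) + \<bar>avg V\<bar> + M + 3\<rceil>"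
  have "real CARD('v) + \<bar>avg V\<bar> + M + 3 \<le> real N" if "N0 \<le> N" for N
    using that unfolding N0_def by linarith
  then show ?thesis
    by (intro exI[of _ N0] allI impI, elim conjE, intro B02_subset_if_large[OF V M(2,1)]) auto
qed

end
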